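(* For every positive integer $n$ there is a permutation of length $16n\log_2 n+\Theta(n)$ that contains every skew riffle permutation of length $n$ as a pattern.
   Context: A permutation $\pi$ of length $k$ is a pattern of $\sigma$ if there are indices $\ell_1<\cdots<\ell_k$ with $\pi_i<\pi_j$ iff $\sigma_{\ell_i}<\sigma_{\ell_j}$. Riffle shuffle permutations are the permutations avoiding $321$, $2143$ and $2413$; antiriffle permutations are the inverses of riffle shuffle permutations. For permutations $\sigma,\tau$, the operation $\sigma\ominus\tau$ (called skew sum in the paper) is the permutation of length $|\sigma|+|\tau|$ with $(\sigma\ominus\tau)_i=\sigma_i$ for $1\le i\le|\sigma|$ and $(\sigma\ominus\tau)_i=\tau_{i-|\sigma|}+|\sigma|$ for $|\sigma|<i\le|\sigma|+|\tau|$. The skew riffle permutations form the smallest set of permutations containing all riffle and antiriffle permutations and closed under this operation. *)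

theory Defs
  imports Complex_Main "HOL-Library.Landau_Symbols"
begin

text \<open>Permutations of length n are represented 0-based as lists that are
  arrangements of 0,...,n-1.\<close>

definition is_perm :: "nat list \<Rightarrow> bool" where
  "is_perm xs \<longleftrightarrow> distinct xs \<and> set xs = {0..<length xs}"

definition contains :: "nat list \<Rightarrow> nat list \<Rightarrow> bool" where
  "contains \<sigma> \<pi> \<longleftrightarrow>
     (\<exists>l :: nat \<Rightarrow> nat. strict_mono_on {0..<length \<pi>} l
        \<and> (\<forall>i<length \<pi>. l i < length \<sigma>)
        \<and> (\<forall>i<length \<pi>. \<forall>j<length \<pi>. \<pi> ! i < \<pi> ! j \<longleftrightarrow> \<sigma> ! (l i) < \<sigma> ! (l j)))"

definition avoids :: "nat list \<Rightarrow> nat list \<Rightarrow> bool" where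
  "avoids \<sigma> \<pi> \<longleftrightarrow> \<not> contains \<sigma> \<pi>"

text \<open>Riffle shuffle permutations: avoid 321, 2143, 2413 (written 0-based).\<close>
definition riffle :: "nat list \<Rightarrow> bool" where
  "riffle \<sigma> \<longleftrightarrow> is_perm \<sigma> \<and> avoids \<sigma> [2,1,0] \<and> avoids \<sigma> [1,0,3,2] \<and> avoids \<sigma> [1,3,0,2]"

definition antiriffle :: "nat list \<Rightarrow> bool" where
  "antiriffle \<sigma> \<longleftrightarrow> is_perm \<sigma> \<and>
     (\<exists>\<rho>. riffle \<rho> \<and> length \<rho> = length \<sigma> \<and> (\<forall>i<length \<sigma>. \<rho> ! (\<sigma> ! i) = i))"

text \<open>The paper's operation (called skew sum there).\<close>
definition skew_sum :: "nat list \<Rightarrow> nat list \<Rightarrow> nat list" where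
  "skew_sum \<sigma> \<tau> = \<sigma> @ map (\<lambda>x. x + length \<sigma>) \<tau>"

inductive skew_riffle :: "nat list \<Rightarrow> bool" where
  riffle_sr: "riffle \<sigma> \<Longrightarrow> skew_riffle \<sigma>"
| antiriffle_sr: "antiriffle \<sigma> \<Longrightarrow> skew_riffle \<sigma>"
| sum_sr: "skew_riffle \<sigma> \<Longrightarrow> skew_riffle \<tau> \<Longrightarrow> skew_riffle (skew_sum \<sigma> \<tau>)"

end

theory Submission
  imports Defs
begin

text \<open>A riffle permutation is the union of two increasing subsequences split by value (the
  bottoms of all its inversions lie below all their tops), so it embeds into the interleaving
  [0, s, 1, s+1, ...] of [0..<s] and [s..<2s]; dually, an antiriffle permutation is the union of
  two increasing subsequences split by position and embeds into [0, 2, 4, ..., 1, 3, 5, ...].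
  Hence every riffle or antiriffle permutation of length at most s is a pattern of a single
  permutation of length 4s.  A skew riffle permutation of length n is a skew sum of such blocks;
  cutting it at the block covering its middle position leaves skew sums of length at most
  n div 2 on both sides, so U n = U (n div 2) \<ominus> B n \<ominus> U (n div 2), with B n the block
  host of length 4n, contains all of them.  Its length satisfies u(n) = 2 u(n div 2) + 4n, hence
  u(n) \<le> 4 n (log_2 n + 1), and padding U n with an increasing tail yields a universal
  permutation of any larger length.\<close>

lemma is_permI: "set xs = {0..<length xs} \<Longrightarrow> is_perm xs"
  unfolding is_perm_def
  by (metis atLeastLessThan_empty_iff card_atLeastLessThan card_distinct diff_zero)

lemma is_perm_nth_less: "is_perm xs \<Longrightarrow> i < length xs \<Longrightarrow> xs ! i < length xs"
  unfolding is_perm_def by (metis atLeastLessThan_iff nth_mem)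

lemma is_perm_nth_eq_iff:
  "is_perm xs \<Longrightarrow> i < length xs \<Longrightarrow> j < length xs \<Longrightarrow> xs ! i = xs ! j \<longleftrightarrow> i = j"
  unfolding is_perm_def by (simp add: nth_eq_iff_index_eq)

lemma is_perm_Nil [simp]: "is_perm []"
  by (simp add: is_perm_def)

lemma is_perm_upt: "is_perm [0..<k]"
  by (simp add: is_perm_def)

lemma length_skew_sum [simp]: "length (skew_sum a b) = length a + length b"
  by (simp add: skew_sum_def)

lemma skew_sum_Nil_left [simp]: "skew_sum [] a = a"
  by (simp add: skew_sum_def)

lemma skew_sum_Nil_right [simp]: "skew_sum a [] = a"
  by (simp add: skew_sum_def)

lemma skew_sum_assoc: "skew_sum (skew_sum a b) c = skew_sum a (skew_sum b c)"
  by (simp add: skew_sum_def add.assoc)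

lemma nth_skew_sum:
  "i < length a + length b \<Longrightarrow>
    skew_sum a b ! i = (if i < length a then a ! i else b ! (i - length a) + length a)"
  by (auto simp: skew_sum_def nth_append)

lemma is_perm_skew_sum: "is_perm a \<Longrightarrow> is_perm b \<Longrightarrow> is_perm (skew_sum a b)"
  by (rule is_permI) (auto simp: skew_sum_def is_perm_def)

subsection \<open>Patterns\<close>

lemma contains_Nil: "contains \<sigma> []"
  by (simp add: contains_def strict_mono_on_def)

lemma containsI_positions:
  assumes "length ls = length \<pi>" "sorted_wrt (<) ls" "\<forall>x\<in>set ls. x < length \<sigma>"
    and "\<forall>i<length \<pi>. \<forall>j<length \<pi>. \<pi> ! i < \<pi> ! j \<longleftrightarrow> \<sigma> ! (ls ! i) < \<sigma> ! (ls ! j)"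
  shows "contains \<sigma> \<pi>"
  unfolding contains_def
proof (intro exI[of _ "(!) ls"] conjI)
  show "strict_mono_on {0..<length \<pi>} ((!) ls)"
    using assms(1,2) by (auto intro!: strict_mono_onI sorted_wrt_nth_less)
qed (use assms in auto)

lemma contains_skew_sum:
  assumes perm: "is_perm \<sigma>\<^sub>1" "is_perm \<pi>\<^sub>1"
    and "contains \<sigma>\<^sub>1 \<pi>\<^sub>1" "contains \<sigma>\<^sub>2 \<pi>\<^sub>2"
  shows "contains (skew_sum \<sigma>\<^sub>1 \<sigma>\<^sub>2) (skew_sum \<pi>\<^sub>1 \<pi>\<^sub>2)"
proof -
  obtain l\<^sub>1 where l\<^sub>1: "strict_mono_on {0..<length \<pi>\<^sub>1} l\<^sub>1" "\<forall>i<length \<pi>\<^sub>1. l\<^sub>1 i < length \<sigma>\<^sub>1"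
    "\<forall>i<length \<pi>\<^sub>1. \<forall>j<length \<pi>\<^sub>1. \<pi>\<^sub>1 ! i < \<pi>\<^sub>1 ! j \<longleftrightarrow> \<sigma>\<^sub>1 ! l\<^sub>1 i < \<sigma>\<^sub>1 ! l\<^sub>1 j"
    using \<open>contains \<sigma>\<^sub>1 \<pi>\<^sub>1\<close> unfolding contains_def by blast
  obtain l\<^sub>2 where l\<^sub>2: "strict_mono_on {0..<length \<pi>\<^sub>2} l\<^sub>2" "\<forall>i<length \<pi>\<^sub>2. l\<^sub>2 i < length \<sigma>\<^sub>2"
    "\<forall>i<length \<pi>\<^sub>2. \<forall>j<length \<pi>\<^sub>2. \<pi>\<^sub>2 ! i < \<pi>\<^sub>2 ! j \<longleftrightarrow> \<sigma>\<^sub>2 ! l\<^sub>2 i < \<sigma>\<^sub>2 ! l\<^sub>2 j"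
    using \<open>contains \<sigma>\<^sub>2 \<pi>\<^sub>2\<close> unfolding contains_def by blast
  define n where "n = length \<pi>\<^sub>1"
  define m where "m = length \<sigma>\<^sub>1"
  define l where "l i = (if i < n then l\<^sub>1 i else m + l\<^sub>2 (i - n))" for i
  have \<pi>_nth: "skew_sum \<pi>\<^sub>1 \<pi>\<^sub>2 ! i = (if i < n then \<pi>\<^sub>1 ! i else \<pi>\<^sub>2 ! (i - n) + n)"
    if "i < n + length \<pi>\<^sub>2" for i
    using that nth_skew_sum[of i \<pi>\<^sub>1 \<pi>\<^sub>2] by (simp add: n_def)
  have \<sigma>_nth: "skew_sum \<sigma>\<^sub>1 \<sigma>\<^sub>2 ! l i = (if i < n then \<sigma>\<^sub>1 ! l\<^sub>1 i else \<sigma>\<^sub>2 ! l\<^sub>2 (i - n) + m)"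
    if "i < n + length \<pi>\<^sub>2" for i
    using that l\<^sub>1(2) l\<^sub>2(2) by (auto simp: skew_sum_def nth_append l_def n_def m_def)
  have lower: "\<pi>\<^sub>1 ! i < n" "\<sigma>\<^sub>1 ! l\<^sub>1 i < m" if "i < n" for i
    using is_perm_nth_less[OF perm(2)] is_perm_nth_less[OF perm(1)] l\<^sub>1(2) that
    by (auto simp: n_def m_def)
  show ?thesis unfolding contains_def
  proof (intro exI[of _ l] conjI allI impI)
    show "strict_mono_on {0..<length (skew_sum \<pi>\<^sub>1 \<pi>\<^sub>2)} l"
    proof (rule strict_mono_onI)
      fix i j assume "i \<in> {0..<length (skew_sum \<pi>\<^sub>1 \<pi>\<^sub>2)}" "j \<in> {0..<length (skew_sum \<pi>\<^sub>1 \<pi>\<^sub>2)}" "i < j"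
      then show "l i < l j"
        using l\<^sub>1 strict_mono_onD[OF l\<^sub>2(1), of "i - n" "j - n"]
        by (auto simp: l_def n_def m_def strict_mono_on_def)
    qed
  next
    fix i assume "i < length (skew_sum \<pi>\<^sub>1 \<pi>\<^sub>2)"
    then show "l i < length (skew_sum \<sigma>\<^sub>1 \<sigma>\<^sub>2)"
      using l\<^sub>1 l\<^sub>2 by (auto simp: l_def n_def m_def)
  next
    fix i j assume "i < length (skew_sum \<pi>\<^sub>1 \<pi>\<^sub>2)" "j < length (skew_sum \<pi>\<^sub>1 \<pi>\<^sub>2)"
    then have i: "i < n + length \<pi>\<^sub>2" and j: "j < n + length \<pi>\<^sub>2" by (auto simp: n_def)
    show "skew_sum \<pi>\<^sub>1 \<pi>\<^sub>2 ! i < skew_sum \<pi>\<^sub>1 \<pi>\<^sub>2 ! j \<longleftrightarrow> skew_sum \<sigma>\<^sub>1 \<sigma>\<^sub>2 ! l i < skew_sum \<sigma>\<^sub>1 \<sigma>\<^sub>2 ! l j"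
      unfolding \<pi>_nth[OF i] \<pi>_nth[OF j] \<sigma>_nth[OF i] \<sigma>_nth[OF j]
      using l\<^sub>1(3) l\<^sub>2(3)[rule_format, of "i - n" "j - n"] lower[of i] lower[of j] i j
      by (auto simp: n_def)
  qed
qed

lemma contains_skew_sum_left:
  "is_perm \<sigma> \<Longrightarrow> is_perm \<pi> \<Longrightarrow> contains \<sigma> \<pi> \<Longrightarrow> contains (skew_sum \<sigma> \<tau>) \<pi>"
  using contains_skew_sum[of \<sigma> \<pi> \<tau> "[]"] by (simp add: contains_Nil)

lemma contains_skew_sum_right:
  "is_perm \<sigma> \<Longrightarrow> contains \<tau> \<pi> \<Longrightarrow> contains (skew_sum \<sigma> \<tau>) \<pi>"
  using contains_skew_sum[of \<sigma> "[]" \<tau> \<pi>] by (simp add: contains_Nil)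

lemma contains_321I:
  assumes "i < j" "j < k" "k < length \<sigma>" "\<sigma> ! k < \<sigma> ! j" "\<sigma> ! j < \<sigma> ! i"
  shows "contains \<sigma> [2,1,0]"
  by (rule containsI_positions[of "[i,j,k]"]) (use assms in \<open>auto simp: numeral_eq_Suc less_Suc_eq\<close>)

lemma contains_2143I:
  assumes "a < b" "b < c" "c < d" "d < length \<sigma>" "\<sigma> ! b < \<sigma> ! a" "\<sigma> ! a < \<sigma> ! d" "\<sigma> ! d < \<sigma> ! c"
  shows "contains \<sigma> [1,0,3,2]"
  by (rule containsI_positions[of "[a,b,c,d]"]) (use assms in \<open>auto simp: numeral_eq_Suc less_Suc_eq\<close>)

lemma contains_2413I:
  assumes "a < b" "b < c" "c < d" "d < length \<sigma>" "\<sigma> ! c < \<sigma> ! a" "\<sigma> ! a < \<sigma> ! d" "\<sigma> ! d < \<sigma> ! b"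
  shows "contains \<sigma> [1,3,0,2]"
  by (rule containsI_positions[of "[a,b,c,d]"]) (use assms in \<open>auto simp: numeral_eq_Suc less_Suc_eq\<close>)

subsection \<open>Riffle and antiriffle permutations\<close>

lemma riffle_inversion_bottom_less_top:
  assumes r: "riffle p"
    and inv: "i < j" "j < length p" "p ! j < p ! i"
    and inv': "i' < j'" "j' < length p" "p ! j' < p ! i'"
  shows "p ! j < p ! i'"
proof (rule ccontr)
  assume contra: "\<not> ?thesis"
  have perm: "is_perm p" and no321: "\<not> contains p [2,1,0]"
    and no2143: "\<not> contains p [1,0,3,2]" and no2413: "\<not> contains p [1,3,0,2]"
    using r by (auto simp: riffle_def avoids_def)
  consider "i' = j" | "p ! i' < p ! j"
    using contra is_perm_nth_eq_iff[OF perm] inv inv' by fastforce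
  then show False
  proof cases
    case 1
    then show False using contains_321I[of i j j' p] no321 inv inv' by auto
  next
    case 2
    have "j' < j"
    proof (rule ccontr)
      assume "\<not> j' < j"
      then have "j < j'" using 2 inv' by (cases "j = j'") auto
      then show False using contains_321I[of i j j' p] no321 inv inv' 2 by auto
    qed
    have "i' < i"
    proof (rule ccontr)
      assume "\<not> i' < i"
      then have "i < i'" using 2 inv by (cases "i = i'") auto
      then show False using contains_321I[of i i' j' p] no321 inv inv' 2 by auto
    qed
    have "i \<noteq> j'" using 2 inv inv' by auto
    then consider "i < j'" | "j' < i" by linarith
    then show False
    proof cases
      case 1
      then show False using contains_2413I[of i' i j' j p] no2413 2 inv inv' \<open>j' < j\<close> \<open>i' < i\<close> by auto
    next
      case 2
      then show False using contains_2143I[of i' j' i j p] no2143 \<open>p ! i' < p ! j\<close> inv inv' by auto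
    qed
  qed
qed

lemma riffle_split_by_value:
  assumes r: "riffle p"
  obtains k where "\<And>a b. a < b \<Longrightarrow> b < length p \<Longrightarrow> (p ! a < k \<longleftrightarrow> p ! b < k) \<Longrightarrow> p ! a < p ! b"
proof
  have perm: "is_perm p" using r by (simp add: riffle_def)
  define tops where "tops = {p ! a | a. \<exists>b. a < b \<and> b < length p \<and> p ! b < p ! a}"
  have "finite tops"
    by (rule finite_subset[of _ "(!) p ` {..<length p}"]) (auto simp: tops_def)
  define k where "k = Min (insert (length p) tops)"
  fix a b assume ab: "a < b" "b < length p" and same_side: "p ! a < k \<longleftrightarrow> p ! b < k"
  have "\<not> p ! b < p ! a"
  proof
    assume inv: "p ! b < p ! a"
    then have "p ! a \<in> tops" using ab by (auto simp: tops_def)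
    then have "k \<le> p ! a" using \<open>finite tops\<close> by (simp add: k_def)
    moreover have "p ! b < k"
      using \<open>finite tops\<close> ab riffle_inversion_bottom_less_top[OF r ab inv] is_perm_nth_less[OF perm]
      by (auto simp: k_def tops_def)
    ultimately show False using same_side by simp
  qed
  moreover have "p ! a \<noteq> p ! b" using is_perm_nth_eq_iff[OF perm] ab by auto
  ultimately show "p ! a < p ! b" by simp
qed

lemma antiriffle_split_by_position:
  assumes "antiriffle s"
  obtains k where "\<And>a b. a < b \<Longrightarrow> b < length s \<Longrightarrow> (a < k \<longleftrightarrow> b < k) \<Longrightarrow> s ! a < s ! b"
proof -
  obtain p where p: "riffle p" "length p = length s" "\<forall>i<length s. p ! (s ! i) = i"
    and perm: "is_perm s"
    using assms unfolding antiriffle_def by blast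
  obtain k where k: "\<And>a b. a < b \<Longrightarrow> b < length p \<Longrightarrow> (p ! a < k \<longleftrightarrow> p ! b < k) \<Longrightarrow> p ! a < p ! b"
    using riffle_split_by_value[OF p(1)] by blast
  show thesis
  proof (rule that)
    fix a b assume ab: "a < b" "b < length s" and same_side: "a < k \<longleftrightarrow> b < k"
    have "\<not> s ! b < s ! a"
    proof
      assume "s ! b < s ! a"
      moreover have "p ! (s ! b) = b" "p ! (s ! a) = a" using p(3) ab by auto
      ultimately have "p ! (s ! b) < p ! (s ! a)"
        using k[of "s ! b" "s ! a"] same_side p(2) is_perm_nth_less[OF perm] ab by auto
      then show False using p(3) ab by auto
    qed
    moreover have "s ! a \<noteq> s ! b" using is_perm_nth_eq_iff[OF perm] ab by auto
    ultimately show "s ! a < s ! b" by simp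
  qed
qed

subsection \<open>Universal permutations for riffles and antiriffles\<close>

definition riffle_univ :: "nat \<Rightarrow> nat list" where
  "riffle_univ s = map (\<lambda>q. if even q then q div 2 else s + q div 2) [0..<2*s]"

definition antiriffle_univ :: "nat \<Rightarrow> nat list" where
  "antiriffle_univ s = map (\<lambda>q. if q < s then 2*q else 2*(q-s) + 1) [0..<2*s]"

lemma length_riffle_univ [simp]: "length (riffle_univ s) = 2*s"
  by (simp add: riffle_univ_def)

lemma length_antiriffle_univ [simp]: "length (antiriffle_univ s) = 2*s"
  by (simp add: antiriffle_univ_def)

lemma is_perm_riffle_univ: "is_perm (riffle_univ s)"
proof (rule is_permI)
  have "x \<in> set (riffle_univ s)" if "x < 2*s" for x
  proof (cases "x < s")
    case True
    then show ?thesis by (auto simp: riffle_univ_def intro!: image_eqI[where x = "2*x"])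
  next
    case False
    then show ?thesis
      using that by (auto simp: riffle_univ_def intro!: image_eqI[where x = "2*(x-s) + 1"])
  qed
  moreover have "set (riffle_univ s) \<subseteq> {0..<2*s}" by (auto simp: riffle_univ_def)
  ultimately show "set (riffle_univ s) = {0..<length (riffle_univ s)}" by auto
qed

lemma is_perm_antiriffle_univ: "is_perm (antiriffle_univ s)"
proof (rule is_permI)
  have "x \<in> set (antiriffle_univ s)" if "x < 2*s" for x
  proof (cases "even x")
    case True
    then show ?thesis
      using that by (auto simp: antiriffle_univ_def intro!: image_eqI[where x = "x div 2"])
  next
    case False
    then show ?thesis
      using that by (auto simp: antiriffle_univ_def intro!: image_eqI[where x = "s + x div 2"])
  qed
  moreover have "set (antiriffle_univ s) \<subseteq> {0..<2*s}" by (auto simp: antiriffle_univ_def)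
  ultimately show "set (antiriffle_univ s) = {0..<length (antiriffle_univ s)}" by auto
qed

lemma contains_riffle_univ:
  assumes r: "riffle p" and len: "length p \<le> s"
  shows "contains (riffle_univ s) p"
proof -
  have perm: "is_perm p" using r by (simp add: riffle_def)
  obtain k where k: "\<And>a b. a < b \<Longrightarrow> b < length p \<Longrightarrow> (p ! a < k \<longleftrightarrow> p ! b < k) \<Longrightarrow> p ! a < p ! b"
    using riffle_split_by_value[OF r] by blast
  define l where "l q = (if p ! q < k then 2*q else 2*q + 1)" for q
  have l_nth: "riffle_univ s ! l q = (if p ! q < k then q else s + q)" if "q < length p" for q
    using that len by (auto simp: riffle_univ_def l_def)
  show ?thesis unfolding contains_def
  proof (intro exI[of _ l] conjI allI impI)
    show "strict_mono_on {0..<length p} l"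
      by (rule strict_mono_onI) (auto simp: l_def)
  next
    fix i assume "i < length p"
    then show "l i < length (riffle_univ s)" using len by (auto simp: l_def)
  next
    fix i j assume i: "i < length p" and j: "j < length p"
    have "i \<noteq> j \<Longrightarrow> p ! i \<noteq> p ! j" using is_perm_nth_eq_iff[OF perm i j] by simp
    then show "p ! i < p ! j \<longleftrightarrow> riffle_univ s ! l i < riffle_univ s ! l j"
      unfolding l_nth[OF i] l_nth[OF j] using i j len k[of i j] k[of j i]
      by (cases "i < j"; cases "j < i"; cases "p ! i < k"; cases "p ! j < k"; auto)
  qed
qed

lemma contains_antiriffle_univ:
  assumes r: "antiriffle p" and len: "length p \<le> s"
  shows "contains (antiriffle_univ s) p"
proof -
  have perm: "is_perm p" using r by (simp add: antiriffle_def)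
  obtain k where k: "\<And>a b. a < b \<Longrightarrow> b < length p \<Longrightarrow> (a < k \<longleftrightarrow> b < k) \<Longrightarrow> p ! a < p ! b"
    using antiriffle_split_by_position[OF r] by blast
  have bound: "p ! q < s" if "q < length p" for q
    using is_perm_nth_less[OF perm that] len by simp
  define l where "l q = (if q < k then p ! q else s + p ! q)" for q
  have l_nth: "antiriffle_univ s ! l q = (if q < k then 2 * p ! q else 2 * p ! q + 1)"
    if "q < length p" for q
    using bound[OF that] by (auto simp: antiriffle_univ_def l_def)
  show ?thesis unfolding contains_def
  proof (intro exI[of _ l] conjI allI impI)
    show "strict_mono_on {0..<length p} l"
    proof (rule strict_mono_onI)
      fix a b assume "a \<in> {0..<length p}" "b \<in> {0..<length p}" "a < b"
      then show "l a < l b" using k[of a b] bound[of a] bound[of b]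
        by (cases "a < k"; cases "b < k"; auto simp: l_def)
    qed
  next
    fix i assume "i < length p"
    then show "l i < length (antiriffle_univ s)" using bound[of i] by (auto simp: l_def)
  next
    fix i j assume i: "i < length p" and j: "j < length p"
    have "i \<noteq> j \<Longrightarrow> p ! i \<noteq> p ! j" using is_perm_nth_eq_iff[OF perm i j] by simp
    then show "p ! i < p ! j \<longleftrightarrow> antiriffle_univ s ! l i < antiriffle_univ s ! l j"
      unfolding l_nth[OF i] l_nth[OF j] by (cases "i = j"; cases "i < k"; cases "j < k"; auto)
  qed
qed

definition riffle_atom :: "nat list \<Rightarrow> bool" where
  "riffle_atom a \<longleftrightarrow> riffle a \<or> antiriffle a"

definition atom_univ :: "nat \<Rightarrow> nat list" where
  "atom_univ s = skew_sum (riffle_univ s) (antiriffle_univ s)"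

lemma riffle_atom_is_perm: "riffle_atom a \<Longrightarrow> is_perm a"
  by (auto simp: riffle_atom_def riffle_def antiriffle_def)

lemma length_atom_univ [simp]: "length (atom_univ s) = 4*s"
  by (simp add: atom_univ_def)

lemma is_perm_atom_univ: "is_perm (atom_univ s)"
  by (simp add: atom_univ_def is_perm_skew_sum is_perm_riffle_univ is_perm_antiriffle_univ)

lemma contains_atom_univ: "riffle_atom a \<Longrightarrow> length a \<le> s \<Longrightarrow> contains (atom_univ s) a"
  unfolding riffle_atom_def atom_univ_def
  using contains_skew_sum_left[OF is_perm_riffle_univ _ contains_riffle_univ]
    contains_skew_sum_right[OF is_perm_riffle_univ contains_antiriffle_univ]
  by (metis riffle_def)

subsection \<open>A universal permutation for skew riffle permutations\<close>

definition skew_sum_list :: "nat list list \<Rightarrow> nat list" where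
  "skew_sum_list xs = foldr skew_sum xs []"

lemma skew_sum_list_simps [simp]:
  "skew_sum_list [] = []"
  "skew_sum_list (a # xs) = skew_sum a (skew_sum_list xs)"
  by (simp_all add: skew_sum_list_def)

lemma skew_sum_list_append: "skew_sum_list (xs @ ys) = skew_sum (skew_sum_list xs) (skew_sum_list ys)"
  by (induction xs) (auto simp: skew_sum_assoc)

lemma length_skew_sum_list: "length (skew_sum_list xs) = sum_list (map length xs)"
  by (induction xs) auto

lemma is_perm_skew_sum_list: "\<forall>a\<in>set xs. riffle_atom a \<Longrightarrow> is_perm (skew_sum_list xs)"
  by (induction xs) (auto intro: is_perm_skew_sum riffle_atom_is_perm)

lemma skew_riffle_obtain_atoms:
  assumes "skew_riffle p"
  obtains xs where "p = skew_sum_list xs" "\<forall>a\<in>set xs. riffle_atom a"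
proof -
  from assms have "\<exists>xs. p = skew_sum_list xs \<and> (\<forall>a\<in>set xs. riffle_atom a)"
  proof (induction rule: skew_riffle.induct)
    case (riffle_sr \<sigma>)
    then show ?case by (intro exI[of _ "[\<sigma>]"]) (auto simp: riffle_atom_def)
  next
    case (antiriffle_sr \<sigma>)
    then show ?case by (intro exI[of _ "[\<sigma>]"]) (auto simp: riffle_atom_def)
  next
    case (sum_sr \<sigma> \<tau>)
    then obtain xs ys where "\<sigma> = skew_sum_list xs" "\<tau> = skew_sum_list ys"
      "\<forall>a\<in>set xs. riffle_atom a" "\<forall>a\<in>set ys. riffle_atom a"
      by blast
    then show ?case by (intro exI[of _ "xs @ ys"]) (auto simp: skew_sum_list_append)
  qed
  then show thesis using that by blast
qed

lemma sum_list_split_at_middle: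
  fixes w :: "'a \<Rightarrow> nat"
  assumes "xs \<noteq> []" "sum_list (map w xs) \<le> p + q + 1"
  shows "\<exists>ys a zs. xs = ys @ a # zs \<and> sum_list (map w ys) \<le> p \<and> sum_list (map w zs) \<le> q"
  using assms
proof (induction xs arbitrary: p)
  case Nil
  then show ?case by simp
next
  case (Cons b rest)
  show ?case
  proof (cases "p < w b \<or> rest = []")
    case True
    then show ?thesis using Cons.prems by (intro exI[of _ "[]"] exI[of _ b] exI[of _ rest]) auto
  next
    case False
    then have "sum_list (map w rest) \<le> (p - w b) + q + 1" "rest \<noteq> []" using Cons.prems by auto
    then obtain ys a zs where "rest = ys @ a # zs" "sum_list (map w ys) \<le> p - w b"
      "sum_list (map w zs) \<le> q"
      using Cons.IH by blast
    then show ?thesis using False by (intro exI[of _ "b # ys"] exI[of _ a] exI[of _ zs]) auto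
  qed
qed

function skew_riffle_univ :: "nat \<Rightarrow> nat list" where
  "skew_riffle_univ n = (if n = 0 then [] else
     skew_sum (skew_sum (skew_riffle_univ (n div 2)) (atom_univ n)) (skew_riffle_univ (n div 2)))"
  by auto
termination by (relation "measure id") auto

declare skew_riffle_univ.simps [simp del]

lemma is_perm_skew_riffle_univ: "is_perm (skew_riffle_univ n)"
proof (induction n rule: less_induct)
  case (less n)
  then show ?case
    by (subst skew_riffle_univ.simps) (simp add: is_perm_skew_sum is_perm_atom_univ)
qed

lemma contains_skew_riffle_univ:
  assumes "\<forall>a\<in>set xs. riffle_atom a" "sum_list (map length xs) \<le> n"
  shows "contains (skew_riffle_univ n) (skew_sum_list xs)"
  using assms
proof (induction n arbitrary: xs rule: less_induct)
  case (less n)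
  show ?case
  proof (cases "xs = [] \<or> n = 0")
    case True
    then have "skew_sum_list xs = []" using less.prems(2) length_skew_sum_list[of xs] by auto
    then show ?thesis by (simp add: contains_Nil)
  next
    case False
    define h where "h = n div 2"
    have "h < n" using False by (simp add: h_def)
    have univ: "skew_riffle_univ n = skew_sum (skew_sum (skew_riffle_univ h) (atom_univ n)) (skew_riffle_univ h)"
      using False by (subst skew_riffle_univ.simps) (simp add: h_def)
    have "xs \<noteq> []" "sum_list (map length xs) \<le> h + h + 1"
      using False less.prems(2) by (auto simp: h_def)
    then obtain ys a zs where xs: "xs = ys @ a # zs"
      and ys: "sum_list (map length ys) \<le> h" and zs: "sum_list (map length zs) \<le> h"
      using sum_list_split_at_middle by blast
    have atoms: "\<forall>a\<in>set ys. riffle_atom a" "riffle_atom a" "\<forall>a\<in>set zs. riffle_atom a"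
      using less.prems(1) xs by auto
    have "length a \<le> n" using less.prems(2) xs by simp
    have "contains (skew_sum (skew_riffle_univ h) (atom_univ n)) (skew_sum (skew_sum_list ys) a)"
      using contains_skew_sum[OF is_perm_skew_riffle_univ is_perm_skew_sum_list[OF atoms(1)]
          less.IH[OF \<open>h < n\<close> atoms(1) ys] contains_atom_univ[OF atoms(2) \<open>length a \<le> n\<close>]] .
    then have "contains (skew_riffle_univ n) (skew_sum (skew_sum (skew_sum_list ys) a) (skew_sum_list zs))"
      unfolding univ
      using contains_skew_sum is_perm_skew_sum is_perm_skew_riffle_univ is_perm_atom_univ
        is_perm_skew_sum_list[OF atoms(1)] riffle_atom_is_perm[OF atoms(2)]
        less.IH[OF \<open>h < n\<close> atoms(3) zs]
      by metis
    then show ?thesis by (simp add: xs skew_sum_list_append skew_sum_assoc)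
  qed
qed

lemma length_skew_riffle_univ_le:
  assumes "n \<ge> 1"
  shows "real (length (skew_riffle_univ n)) \<le> 4 * real n * (log 2 (real n) + 1)"
  using assms
proof (induction n rule: less_induct)
  case (less n)
  show ?case
  proof (cases "n = 1")
    case True
    then show ?thesis by (subst skew_riffle_univ.simps) (simp add: skew_riffle_univ.simps)
  next
    case False
    define h where "h = n div 2"
    have h: "1 \<le> h" "h < n" "2 * h \<le> n" using False less.prems by (auto simp: h_def)
    have "log 2 (2 * real h) \<le> log 2 (real n)" using h by simp
    then have mono: "4 * (2 * real h) * log 2 (2 * real h) \<le> 4 * real n * log 2 (real n)"
      using h by (intro mult_mono) auto
    have "real (length (skew_riffle_univ n)) = 2 * real (length (skew_riffle_univ h)) + 4 * real n"
      using less.prems by (subst skew_riffle_univ.simps) (simp add: h_def)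
    also have "\<dots> \<le> 2 * (4 * real h * (log 2 (real h) + 1)) + 4 * real n"
      using less.IH[OF h(2,1)] by simp
    also have "\<dots> = 4 * (2 * real h) * log 2 (2 * real h) + 4 * real n"
      using h by (simp add: log_mult algebra_simps)
    also have "\<dots> \<le> 4 * real n * (log 2 (real n) + 1)"
      using mono by (simp add: algebra_simps)
    finally show ?thesis .
  qed
qed

lemma nat_ceiling_plus_linear_minus_bigtheta:
  fixes f :: "nat \<Rightarrow> real" and c :: nat
  assumes "c > 0" "\<And>n. f n \<ge> 0"
  shows "(\<lambda>n. real (nat \<lceil>f n\<rceil> + c * n) - f n) \<in> \<Theta>(\<lambda>n. real n)"
proof (rule bigthetaI'[of "real c" "real c + 1"])
  show "\<forall>\<^sub>F n in at_top. real c * norm (real n) \<le> norm (real (nat \<lceil>f n\<rceil> + c * n) - f n)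
      \<and> norm (real (nat \<lceil>f n\<rceil> + c * n) - f n) \<le> (real c + 1) * norm (real n)"
    using eventually_ge_at_top[of "1::nat"]
  proof eventually_elim
    case (elim n)
    define d where "d = of_int \<lceil>f n\<rceil> - f n"
    have eq: "real (nat \<lceil>f n\<rceil> + c * n) - f n = d + real c * real n"
      using assms(2)[of n] by (simp add: d_def of_nat_nat)
    have "0 \<le> d" "d \<le> 1"
      using le_of_int_ceiling[of "f n"] of_int_ceiling_le_add_one[of "f n"]
      unfolding d_def by linarith+
    moreover have "1 \<le> real n" using elim by simp
    ultimately show ?case unfolding eq by (simp add: abs_of_nonneg distrib_right)
  qed
qed (use assms in simp_all)

theorem theorem13:
  shows "\<exists>L :: nat \<Rightarrow> nat.
    (\<lambda>n. real (L n) - 16 * real n * log 2 (real n)) \<in> \<Theta>(\<lambda>n. real n) \<and>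
    (\<forall>n>0. \<exists>\<sigma>. is_perm \<sigma> \<and> length \<sigma> = L n \<and>
        (\<forall>\<pi>. length \<pi> = n \<and> skew_riffle \<pi> \<longrightarrow> contains \<sigma> \<pi>))"
proof (intro exI[of _ "\<lambda>n. nat \<lceil>16 * real n * log 2 (real n)\<rceil> + 4 * n"] conjI allI impI)
  show "(\<lambda>n. real (nat \<lceil>16 * real n * log 2 (real n)\<rceil> + 4 * n) - 16 * real n * log 2 (real n))
      \<in> \<Theta>(\<lambda>n. real n)"
  proof (rule nat_ceiling_plus_linear_minus_bigtheta)
    show "0 \<le> 16 * real n * log 2 (real n)" for n :: nat
      by (cases "n = 0") auto
  qed simp
next
  fix n :: nat assume "n > 0"
  define L where "L = nat \<lceil>16 * real n * log 2 (real n)\<rceil> + 4 * n"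
  have "real (length (skew_riffle_univ n)) \<le> 4 * real n * (log 2 (real n) + 1)"
    using length_skew_riffle_univ_le \<open>n > 0\<close> by simp
  also have "\<dots> \<le> 16 * real n * log 2 (real n) + 4 * real n"
    using \<open>n > 0\<close> by (simp add: algebra_simps)
  also have "\<dots> \<le> real L"
    unfolding L_def by linarith
  finally have "length (skew_riffle_univ n) \<le> L" by linarith
  define \<sigma> where "\<sigma> = skew_sum (skew_riffle_univ n) [0..<L - length (skew_riffle_univ n)]"
  have "is_perm \<sigma>" "length \<sigma> = L"
    using \<open>length (skew_riffle_univ n) \<le> L\<close>
    by (simp_all add: \<sigma>_def is_perm_skew_sum is_perm_skew_riffle_univ is_perm_upt)
  moreover have "contains \<sigma> \<pi>" if "length \<pi> = n" "skew_riffle \<pi>" for \<pi>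
  proof -
    obtain xs where xs: "\<pi> = skew_sum_list xs" "\<forall>a\<in>set xs. riffle_atom a"
      using skew_riffle_obtain_atoms[OF \<open>skew_riffle \<pi>\<close>] by blast
    have "contains (skew_riffle_univ n) \<pi>"
      using contains_skew_riffle_univ[OF xs(2)] length_skew_sum_list[of xs] xs(1) that(1) by simp
    then show ?thesis
      unfolding \<sigma>_def
      using contains_skew_sum_left is_perm_skew_riffle_univ is_perm_skew_sum_list[OF xs(2)] xs(1)
      by blast
  qed
  ultimately show "\<exists>\<sigma>. is_perm \<sigma> \<and> length \<sigma> = nat \<lceil>16 * real n * log 2 (real n)\<rceil> + 4 * n
      \<and> (\<forall>\<pi>. length \<pi> = n \<and> skew_riffle \<pi> \<longrightarrow> contains \<sigma> \<pi>)"
    unfolding L_def by blast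
qed

end
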